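(* Let $\mathbf{C}$ be a covering of a finite nonempty set $U$. Then $Cov(\mathbf{C})=\mathbf{C}$ if and only if $\mathbf{C}$ is an invariable covering.
   Context: A covering of $U$ is a family (set) $\mathbf{C}$ of subsets of $U$ with $\emptyset\notin\mathbf{C}$ and $\bigcup\mathbf{C}=U$; its elements are called blocks. For $x\in U$, the neighborhood of $x$ is $N(x)=\bigcap\{K\in\mathbf{C}: x\in K\}$, and $Cov(\mathbf{C})=\{N(x): x\in U\}$. The membership repeat degree of $x\in U$ is $\partial(x)=|\{K\in\mathbf{C}: x\in K\}|$. The common block repeat degree of $(x,y)\in U\times U$ is $\lambda(x,y)=|\{K\in\mathbf{C}: \{x,y\}\subseteq K\}|$. A block $K\in\mathbf{C}$ is a core block of $x\in U$ if $x\in K$ and $\lambda(x,y)=\partial(x)$ for every $y\in K$. A block $K\in\mathbf{C}$ is a reducible element of $\mathbf{C}$ if $K$ is the union of some subfamily of $\mathbf{C}\setminus\{K\}$; otherwise it is irreducible. $\mathbf{C}$ is irreducible if all its blocks are irreducible elements. $\mathbf{C}$ is an invariable covering if $\mathbf{C}$ is irreducible and every $x\in U$ has a core block in $\mathbf{C}$. *)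

theory Defs
  imports Main
begin

definition covering :: "'a set \<Rightarrow> 'a set set \<Rightarrow> bool" where
  "covering U C \<longleftrightarrow> {} \<notin> C \<and> \<Union>C = U"

definition nbhd :: "'a set set \<Rightarrow> 'a \<Rightarrow> 'a set" where
  "nbhd C x = \<Inter>{K \<in> C. x \<in> K}"

definition Cov :: "'a set \<Rightarrow> 'a set set \<Rightarrow> 'a set set" where
  "Cov U C = {nbhd C x | x. x \<in> U}"

definition mrd :: "'a set set \<Rightarrow> 'a \<Rightarrow> nat" where
  "mrd C x = card {K \<in> C. x \<in> K}"

definition cbrd :: "'a set set \<Rightarrow> 'a \<Rightarrow> 'a \<Rightarrow> nat" where
  "cbrd C x y = card {K \<in> C. {x, y} \<subseteq> K}"

definition core_block :: "'a set set \<Rightarrow> 'a \<Rightarrow> 'a set \<Rightarrow> bool" where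
  "core_block C x K \<longleftrightarrow> K \<in> C \<and> x \<in> K \<and> (\<forall>y\<in>K. cbrd C x y = mrd C x)"

definition reducible_elem :: "'a set set \<Rightarrow> 'a set \<Rightarrow> bool" where
  "reducible_elem C K \<longleftrightarrow> K \<in> C \<and> (\<exists>D \<subseteq> C - {K}. K = \<Union>D)"

definition irreducible_cov :: "'a set set \<Rightarrow> bool" where
  "irreducible_cov C \<longleftrightarrow> (\<forall>K\<in>C. \<not> reducible_elem C K)"

definition invariable_covering :: "'a set \<Rightarrow> 'a set set \<Rightarrow> bool" where
  "invariable_covering U C \<longleftrightarrow> irreducible_cov C \<and> (\<forall>x\<in>U. \<exists>K. core_block C x K)"

end

theory Submission
  imports Defs
begin

(* For a finite family C, a block K is a core block of x exactly
   when K is a block equal to the neighbourhood N(x): the equality of repeat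
   degrees lambda(x,y) = d(x) says that every block containing x also
   contains y, i.e. y lies in N(x).  Hence "every x has a core block" means
   Cov(C) \<subseteq> C.  The remaining inclusion is governed by irreducibility:
   a neighbourhood that is a block can never be the union of other blocks
   (the block of the union containing x would have to equal N(x)), while every
   block K is the union of the neighbourhoods of its points, so a block that
   is not a neighbourhood is reducible.  The main theorem combines these
   facts; finiteness of U only serves to make C finite, so that repeat degrees
   are honest cardinalities. *)

lemma nbhd_subset: "K \<in> C \<Longrightarrow> x \<in> K \<Longrightarrow> nbhd C x \<subseteq> K"
  unfolding nbhd_def by blast

lemma mem_nbhd: "x \<in> nbhd C x"
  unfolding nbhd_def by blast

lemma finite_covering:
  assumes "finite U" and "covering U C"
  shows "finite C"
proof -
  have "C \<subseteq> Pow U" using assms(2) unfolding covering_def by blast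
  then show ?thesis using assms(1) by (simp add: finite_subset)
qed

lemma core_block_iff_nbhd:
  assumes fin: "finite C"
  shows "core_block C x K \<longleftrightarrow> K \<in> C \<and> K = nbhd C x"
proof
  assume "core_block C x K"
  hence KC: "K \<in> C" and xK: "x \<in> K" and degrees: "\<forall>y\<in>K. cbrd C x y = mrd C x"
    unfolding core_block_def by auto
  have "K \<subseteq> nbhd C x"
  proof
    fix y assume yK: "y \<in> K"
    let ?Cxy = "{K \<in> C. {x, y} \<subseteq> K}" and ?Cx = "{K \<in> C. x \<in> K}"
    have "?Cxy \<subseteq> ?Cx" by auto
    moreover have "finite ?Cx" using fin by auto
    moreover have "card ?Cxy = card ?Cx"
      using degrees yK unfolding cbrd_def mrd_def by auto
    ultimately have "?Cxy = ?Cx" using card_subset_eq by blast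
    thus "y \<in> nbhd C x" unfolding nbhd_def by blast
  qed
  with nbhd_subset[OF KC xK] KC show "K \<in> C \<and> K = nbhd C x" by auto
next
  assume K: "K \<in> C \<and> K = nbhd C x"
  have "cbrd C x y = mrd C x" if "y \<in> K" for y
  proof -
    have "{K \<in> C. {x, y} \<subseteq> K} = {K \<in> C. x \<in> K}"
      using that K unfolding nbhd_def by blast
    thus ?thesis unfolding cbrd_def mrd_def by simp
  qed
  thus "core_block C x K" using K mem_nbhd[of x C] unfolding core_block_def by auto
qed

lemma core_blocks_iff_Cov_subset:
  assumes "finite C"
  shows "(\<forall>x\<in>U. \<exists>K. core_block C x K) \<longleftrightarrow> Cov U C \<subseteq> C"
proof -
  have "(\<exists>K. core_block C x K) \<longleftrightarrow> nbhd C x \<in> C" for x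
    using core_block_iff_nbhd[OF assms] by auto
  thus ?thesis unfolding Cov_def by auto
qed

(* A block that is a neighbourhood is irreducible: a union of blocks equal to
   N(x) contains a block through x, which is then squeezed to N(x) itself. *)
lemma nbhd_not_reducible: "\<not> reducible_elem C (nbhd C x)"
proof
  assume "reducible_elem C (nbhd C x)"
  then obtain D where D: "D \<subseteq> C - {nbhd C x}" "nbhd C x = \<Union>D"
    unfolding reducible_elem_def by blast
  then obtain E where E: "E \<in> D" "x \<in> E" using mem_nbhd[of x C] by blast
  have "E \<subseteq> nbhd C x" using D E by blast
  moreover have "nbhd C x \<subseteq> E" using nbhd_subset[of E C x] D E by blast
  ultimately show False using D E by blast
qed

lemma block_eq_Union_nbhds:
  assumes "K \<in> C"
  shows "K = \<Union>(nbhd C ` K)"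
  using mem_nbhd[of _ C] nbhd_subset[OF assms] by blast

(* If all neighbourhoods are blocks and C is irreducible, every block is a
   neighbourhood: otherwise it is the union of neighbourhoods different from it. *)
lemma irreducible_imp_subset_Cov:
  assumes covers: "\<Union>C = U" and sub: "Cov U C \<subseteq> C" and irr: "irreducible_cov C"
  shows "C \<subseteq> Cov U C"
proof
  fix K assume KC: "K \<in> C"
  show "K \<in> Cov U C"
  proof (rule ccontr)
    assume notCov: "K \<notin> Cov U C"
    have "nbhd C ` K \<subseteq> Cov U C"
      using KC covers unfolding Cov_def by blast
    hence "nbhd C ` K \<subseteq> C - {K}" using sub notCov by blast
    hence "reducible_elem C K"
      using block_eq_Union_nbhds[OF KC] KC unfolding reducible_elem_def by blast
    thus False using irr KC unfolding irreducible_cov_def by blast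
  qed
qed

theorem theorem23:
  fixes U :: "'a set" and C :: "'a set set"
  assumes "finite U" and "U \<noteq> {}" and "covering U C"
  shows "Cov U C = C \<longleftrightarrow> invariable_covering U C"
proof
  assume eq: "Cov U C = C"
  have "irreducible_cov C"
    unfolding irreducible_cov_def
  proof
    fix K assume "K \<in> C"
    then obtain x where "K = nbhd C x" using eq unfolding Cov_def by auto
    thus "\<not> reducible_elem C K" using nbhd_not_reducible by simp
  qed
  moreover have "\<forall>x\<in>U. \<exists>K. core_block C x K"
    using eq core_blocks_iff_Cov_subset[OF finite_covering[OF assms(1,3)]] by simp
  ultimately show "invariable_covering U C" unfolding invariable_covering_def by blast
next
  assume "invariable_covering U C"
  hence irr: "irreducible_cov C" and sub: "Cov U C \<subseteq> C"
    using core_blocks_iff_Cov_subset[OF finite_covering[OF assms(1,3)]]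
    unfolding invariable_covering_def by auto
  have "\<Union>C = U" using assms(3) unfolding covering_def by blast
  with sub irr show "Cov U C = C" using irreducible_imp_subset_Cov by blast
qed

end
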